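(* Let $A$ be the $3\times3$ Jordan block with eigenvalue $0$ (ones on the superdiagonal, zeros elsewhere), and let $\Omega$ be the disk centered at the origin of radius $r$ with $0<r\le1$. Parametrize $\partial\Omega$ by arc length as $\sigma(s)=re^{is/r}$, $s\in[0,2\pi r]$, define the Hermitian matrix \[ \mu(\sigma(s),A)=\frac{\sigma'(s)}{2\pi i}(\sigma(s)I-A)^{-1}+\left[\frac{\sigma'(s)}{2\pi i}(\sigma(s)I-A)^{-1}\right]^{*}, \] and set $\delta=-\int_0^{2\pi r}\lambda_{\min}(\mu(\sigma(s),A))\,ds$, where $\lambda_{\min}$ denotes the smallest eigenvalue. Then \[ \max_{f}\frac{\|f(A)\|}{\|f\|_\Omega}=2+\delta, \] the maximum being over all nonzero functions $f$ analytic in $\Omega$ and continuous on its closure, with $\|f\|_\Omega=\sup_{z\in\Omega}|f(z)|$.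
   Context: $\|\cdot\|$ is the matrix 2-norm. *)

theory Defs
  imports "HOL-Analysis.Analysis"
begin

text \<open>The 3x3 Jordan block with eigenvalue 0 (ones on the superdiagonal).
  Indices of type 3 are 0,1,2.\<close>
definition jordan3 :: "complex^3^3" where
  "jordan3 = (\<chi> i j. if Rep_bit1 j = Rep_bit1 i + 1 then 1 else 0)"

definition mat_norm2 :: "complex^'n^'m \<Rightarrow> real" where
  "mat_norm2 M = onorm (\<lambda>x. M *v x)"

definition adjoint_mat :: "complex^'n^'n \<Rightarrow> complex^'n^'n" where
  "adjoint_mat M = (\<chi> i j. cnj (M $ j $ i))"

text \<open>Smallest eigenvalue of a Hermitian matrix (its eigenvalues are real).\<close>
definition lambda_min :: "complex^'n^'n \<Rightarrow> real" where
  "lambda_min M = Inf {x::real. \<exists>v. v \<noteq> 0 \<and> M *v v = complex_of_real x *s v}"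

definition cscale_mat :: "complex \<Rightarrow> complex^'n^'m \<Rightarrow> complex^'n^'m" where
  "cscale_mat c M = (\<chi> i j. c * M $ i $ j)"

definition mat_pow :: "complex^'n^'n \<Rightarrow> nat \<Rightarrow> complex^'n^'n" where
  "mat_pow M k = ((\<lambda>X. M ** X) ^^ k) (mat 1)"

text \<open>Holomorphic functional calculus for the nilpotent Jordan block (spectrum {0},
  index 3): f(A) = sum over k<3 of f^(k)(0)/k! A^k.\<close>
definition fun_jordan3 :: "(complex \<Rightarrow> complex) \<Rightarrow> complex^3^3" where
  "fun_jordan3 f = (\<Sum>k<3. cscale_mat ((deriv ^^ k) f 0 / of_nat (fact k)) (mat_pow jordan3 k))"

definition sigma :: "real \<Rightarrow> real \<Rightarrow> complex" where
  "sigma r s = complex_of_real r * exp (\<i> * complex_of_real (s / r))"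

definition mu_mat :: "real \<Rightarrow> real \<Rightarrow> complex^3^3" where
  "mu_mat r s = (let B = cscale_mat (vector_derivative (sigma r) (at s) / (2 * complex_of_real pi * \<i>))
                          (matrix_inv (cscale_mat (sigma r s) (mat 1) - jordan3))
                 in B + adjoint_mat B)"

definition delta :: "real \<Rightarrow> real" where
  "delta r = - integral {0..2 * pi * r} (\<lambda>s. lambda_min (mu_mat r s))"

definition sup_norm :: "(complex \<Rightarrow> complex) \<Rightarrow> complex set \<Rightarrow> real" where
  "sup_norm f S = (SUP z\<in>S. norm (f z))"

end

theory Submission
  imports Defs "HOL-Complex_Analysis.Cauchy_Integral_Formula"
begin

text \<open>
  For y, x in C^3 the form (y, f(A) x) is the sum over i \<le> j of conj(y_i) x_j f^(j-i)(0) / (j-i)!.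
  By Cauchy's formula, and Cauchy's theorem for the terms with non-negative powers of z, it is the
  mean of f(z) P(z) Q(1/z) over the circle |z| = r, where P(z) = sum_k conj(y_k) z^k and
  Q(w) = sum_j x_j w^j. Bounding |f| by M = sup |f|, splitting |P| |Q| by the weighted AM-GM
  inequality and evaluating both mean squares by Parseval's identity gives
  |(y, f(A) x)| \<le> M / (2 r^2) (|y|^2 + |x|^2) for r \<le> 1, hence ||f(A)|| \<le> M / r^2, with equality
  for f(z) = z^2.

  On the other side, with e = exp(i s / r), the quadratic form of mu(sigma(s), A) is
  ((2 r^2 - 1) |v|^2 + |v_0 + r conj(e) v_1 + conj(e)^2 v_2|^2 + (1 - r^2) |v_1|^2) / (2 pi r^3),
  so its least eigenvalue is (2 r^2 - 1) / (2 pi r^3) for every s, and 2 + delta = 1 / r^2.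
\<close>

section \<open>Matrices, eigenvalues and operator norms\<close>

lemma cnj_mult_self: "cnj z * z = of_real ((norm z)\<^sup>2)"
  by (simp add: complex_norm_square mult.commute del: of_real_power)

lemma norm_vec_sq_eq_sum: "(norm (v :: complex^'n))\<^sup>2 = (\<Sum>i\<in>UNIV. (norm (v $ i))\<^sup>2)"
  unfolding norm_vec_def L2_set_def by (simp add: sum_nonneg)

lemma norm_axis: "norm (axis i c) = norm (c :: 'a :: real_normed_vector)"
  unfolding norm_vec_def L2_set_def axis_def
  by (simp add: if_distrib[of "\<lambda>c. (norm c)\<^sup>2"] cong: if_cong)

lemma matrix_inv_unique:
  fixes A B :: "'a::comm_ring_1^'n^'n"
  assumes "A ** B = mat 1" "B ** A = mat 1"
  shows "matrix_inv A = B"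
proof -
  have "\<exists>A'. A ** A' = mat 1 \<and> A' ** A = mat 1"
    using assms by blast
  then have "A ** matrix_inv A = mat 1" "matrix_inv A ** A = mat 1"
    unfolding matrix_inv_def by (metis (mono_tags, lifting) someI_ex)+
  then show ?thesis
    by (metis assms(1) matrix_mul_assoc matrix_mul_lid matrix_mul_rid)
qed

lemma lambda_min_eqI:
  fixes M :: "complex^'n^'n"
  assumes eigen: "M *v w = of_real m *s w" "w \<noteq> 0"
    and form: "\<And>v. m * (norm v)\<^sup>2 \<le> Re (\<Sum>i\<in>UNIV. cnj (v $ i) * (M *v v) $ i)"
  shows "lambda_min M = m"
  unfolding lambda_min_def
proof (rule cInf_eq_minimum)
  show "m \<in> {x. \<exists>v. v \<noteq> 0 \<and> M *v v = complex_of_real x *s v}"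
    using eigen by blast
next
  fix x assume "x \<in> {x. \<exists>v. v \<noteq> 0 \<and> M *v v = complex_of_real x *s v}"
  then obtain v where v: "v \<noteq> 0" "M *v v = of_real x *s v" by blast
  have "(\<Sum>i\<in>UNIV. cnj (v $ i) * (M *v v) $ i) = of_real (x * (norm v)\<^sup>2)"
    by (simp add: v(2) norm_vec_sq_eq_sum sum_distrib_left cnj_mult_self mult.left_commute del: of_real_power)
  then have "m * (norm v)\<^sup>2 \<le> x * (norm v)\<^sup>2"
    using form[of v] by simp
  then show "m \<le> x"
    using v(1) by simp
qed

lemma mat_norm2_le_of_inner_bound:
  fixes F :: "complex^'n^'m"
  assumes bound: "\<And>x y. norm (\<Sum>i\<in>UNIV. cnj (y $ i) * (F *v x) $ i) \<le> C / 2 * ((norm y)\<^sup>2 + (norm x)\<^sup>2)"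
  shows "mat_norm2 F \<le> C"
  unfolding mat_norm2_def
proof (rule onorm_le)
  fix x :: "complex^'n"
  show "norm (F *v x) \<le> C * norm x"
  proof (cases "F *v x = 0")
    case True
    have "0 \<le> C / 2 * (norm x)\<^sup>2"
      using bound[of 0 x] by simp
    then have "0 \<le> C \<or> x = 0"
      by (auto simp: zero_le_mult_iff)
    then show ?thesis
      using True by auto
  next
    case False
    let ?v = "F *v x"
    have x: "x \<noteq> 0" using False by auto
    define s where "s = norm x / norm ?v"
    have s: "s > 0" using False x by (simp add: s_def)
    \<comment> \<open>Test against y = s (F x), rescaled to the norm of x: the bound becomes C |x|^2.\<close>
    have "(\<Sum>i\<in>UNIV. cnj ((s *\<^sub>R ?v) $ i) * ?v $ i) = of_real (s * (norm ?v)\<^sup>2)"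
      unfolding vector_scaleR_component
      by (simp add: norm_vec_sq_eq_sum cnj_mult_self scaleR_conv_of_real sum_distrib_left mult.assoc
               del: of_real_power)
    also have "s * (norm ?v)\<^sup>2 = norm x * norm ?v"
      using False by (simp add: s_def power2_eq_square)
    finally have "norm x * norm ?v \<le> C / 2 * ((norm (s *\<^sub>R ?v))\<^sup>2 + (norm x)\<^sup>2)"
      using bound[of "s *\<^sub>R ?v" x] by (simp add: norm_mult)
    also have "norm (s *\<^sub>R ?v) = norm x"
      using s False by (simp add: s_def)
    finally have "norm x * norm ?v \<le> norm x * (C * norm x)"
      by (simp add: power2_eq_square mult_ac)
    then show ?thesis
      using x by simp
  qed
qed

lemma mat_norm2_matrix_unit:
  "mat_norm2 (\<chi> i j. if i = a \<and> j = b then 1 else 0 :: complex^'n^'m) = 1"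
proof -
  let ?E = "\<chi> i j. if i = a \<and> j = b then 1 else 0 :: complex^'n^'m"
  have Ex: "?E *v x = axis a (x $ b)" for x
    by (simp add: vec_eq_iff matrix_vector_mult_def axis_def if_distrib[of "\<lambda>c. c * _"] sum.delta'
             cong: if_cong)
  have "onorm ((*v) ?E) \<le> 1"
    by (rule onorm_le) (simp add: Ex norm_axis Finite_Cartesian_Product.norm_nth_le)
  moreover have "1 \<le> onorm ((*v) ?E)"
    using onorm[OF matrix_vector_mul_bounded_linear, of ?E "axis b 1"] by (simp add: Ex norm_axis)
  ultimately show ?thesis
    unfolding mat_norm2_def by simp
qed

lemma norm_le_sup_norm:
  assumes "0 < r" "continuous_on (cball a r) f" "w \<in> cball a r"
  shows "norm (f w) \<le> sup_norm f (ball a r)"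
proof -
  have "bounded (f ` cball a r)"
    by (intro compact_imp_bounded compact_continuous_image assms(2) compact_cball)
  then have "bdd_above ((\<lambda>z. norm (f z)) ` ball a r)"
    unfolding bounded_iff bdd_above_def by fastforce
  then have "norm (f z) \<le> sup_norm f (ball a r)" if "z \<in> ball a r" for z
    unfolding sup_norm_def using that by (rule cSUP_upper2) simp
  then show ?thesis
    using assms by (intro continuous_on_closure_norm_le[of "ball a r" f]) auto
qed

section \<open>Fourier analysis on the unit circle\<close>

lemma has_integral_cis_int_multiple:
  fixes m :: int
  shows "((\<lambda>t. cis (2 * pi * m * t)) has_integral (if m = 0 then 1 else 0)) {0..1}"
proof (cases "m = 0")
  case True
  then show ?thesis using has_integral_const_real[of "1::complex" 0 1] by simp
next
  case False
  define c :: complex where "c = \<i> * (2 * pi * m)"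
  have c: "c \<noteq> 0" using False by (simp add: c_def)
  have cis_eq: "cis (2 * pi * m * t) = exp (c * t)" for t
    by (simp add: c_def cis_conv_exp mult_ac)
  have "((\<lambda>t. exp (c * of_real t) / c) has_vector_derivative exp (c * of_real t)) (at t within {0..1})"
    for t :: real
  proof -
    have "((\<lambda>z. exp (c * z) / c) has_field_derivative exp (c * t)) (at (of_real t))"
      using c by (auto intro!: derivative_eq_intros)
    then show ?thesis
      by (rule has_vector_derivative_at_within[OF has_vector_derivative_real_field])
  qed
  then have "((\<lambda>t. exp (c * of_real t)) has_integral (exp c / c - 1 / c)) {0..1}"
    using fundamental_theorem_of_calculus[of 0 1 "\<lambda>t. exp (c * t) / c" "\<lambda>t. exp (c * t)"] by simp
  moreover have "exp c = 1"
    using cis_eq[of 1] by simp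
  ultimately show ?thesis using False by (simp add: cis_eq)
qed

lemma has_integral_cnj_cis_power_mult_cis_power:
  "((\<lambda>t. cnj (cis (2 * pi * t) ^ k) * cis (2 * pi * t) ^ j) has_integral of_bool (k = j)) {0..1}"
proof -
  have "cnj (cis (2 * pi * t) ^ k) * cis (2 * pi * t) ^ j = cis (2 * pi * (int j - int k) * t)" for t
    unfolding complex_cnj_power cis_cnj Complex.DeMoivre cis_mult by (simp add: algebra_simps)
  then show ?thesis using has_integral_cis_int_multiple[of "int j - int k"] by (cases "k = j") auto
qed

lemma has_integral_norm_sum_cis_power_sq:
  "((\<lambda>t. (norm (\<Sum>k<n. c k * cis (2 * pi * t) ^ k))\<^sup>2) has_integral (\<Sum>k<n. (norm (c k))\<^sup>2)) {0..1}"
proof -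
  let ?e = "\<lambda>t. cis (2 * pi * t)"
  have "((\<lambda>t. \<Sum>k<n. \<Sum>j<n. cnj (c k) * c j * (cnj (?e t ^ k) * ?e t ^ j)) has_integral
          (\<Sum>k<n. \<Sum>j<n. cnj (c k) * c j * of_bool (k = j))) {0..1}"
    by (intro has_integral_sum finite_lessThan has_integral_mult_right
          has_integral_cnj_cis_power_mult_cis_power)
  moreover have "(\<Sum>k<n. \<Sum>j<n. cnj (c k) * c j * of_bool (k = j)) = of_real (\<Sum>k<n. (norm (c k))\<^sup>2)"
    by (simp add: cnj_mult_self sum.delta del: of_real_power)
  moreover have "(\<Sum>k<n. \<Sum>j<n. cnj (c k) * c j * (cnj (?e t ^ k) * ?e t ^ j)) =
                 of_real ((norm (\<Sum>k<n. c k * ?e t ^ k))\<^sup>2)" for t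
    unfolding cnj_mult_self[symmetric] cnj_sum sum_product by (simp add: mult_ac)
  ultimately have "((\<lambda>t. of_real ((norm (\<Sum>k<n. c k * ?e t ^ k))\<^sup>2)) has_integral
                     (of_real (\<Sum>k<n. (norm (c k))\<^sup>2) :: complex)) {0..1}"
    by simp
  from has_integral_Re[OF this] show ?thesis by simp
qed

section \<open>Taylor coefficients as circle means\<close>

lemma has_integral_circlepath_param:
  assumes "(g has_contour_integral I) (circlepath 0 r)"
  shows "((\<lambda>t. rcis r (2 * pi * t) * g (rcis r (2 * pi * t))) has_integral I / (2 * pi * \<i>)) {0..1}"
proof -
  have "((\<lambda>t. g (circlepath 0 r t) * vector_derivative (circlepath 0 r) (at t within {0..1}) / (2 * pi * \<i>))
          has_integral I / (2 * pi * \<i>)) {0..1}"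
    using assms unfolding has_contour_integral_def by (rule has_integral_divide)
  moreover have "g (circlepath 0 r t) * vector_derivative (circlepath 0 r) (at t within {0..1}) / (2 * pi * \<i>)
      = rcis r (2 * pi * t) * g (rcis r (2 * pi * t))" if "t \<in> {0..1}" for t
    using that by (simp add: vector_derivative_circlepath01) (simp add: circlepath rcis_def cis_conv_exp mult_ac)
  ultimately show ?thesis
    by (rule has_integral_eq[rotated])
qed

lemma circle_mean_div_power:
  assumes "0 < r" "f holomorphic_on ball 0 r" "continuous_on (cball 0 r) f"
  shows "((\<lambda>t. f (rcis r (2 * pi * t)) / rcis r (2 * pi * t) ^ k) has_integral (deriv ^^ k) f 0 / fact k) {0..1}"
proof -
  have "((\<lambda>u. f u / (u - 0) ^ Suc k) has_contour_integral (2 * pi * \<i> / fact k * (deriv ^^ k) f 0)) (circlepath 0 r)"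
    using assms by (intro Cauchy_has_contour_integral_higher_derivative_circlepath) auto
  from has_integral_circlepath_param[OF this]
  have "((\<lambda>t. rcis r (2 * pi * t) * (f (rcis r (2 * pi * t)) / rcis r (2 * pi * t) ^ Suc k))
          has_integral (deriv ^^ k) f 0 / fact k) {0..1}"
    by simp
  then show ?thesis
    by (rule has_integral_eq[rotated]) (use assms in simp)
qed

lemma circle_mean_mult_power_div_power:
  assumes r: "0 < r" and hol: "f holomorphic_on ball 0 r" and cont: "continuous_on (cball 0 r) f"
  shows "((\<lambda>t. f (rcis r (2 * pi * t)) * rcis r (2 * pi * t) ^ m / rcis r (2 * pi * t) ^ j)
           has_integral (if m \<le> j then (deriv ^^ (j - m)) f 0 / fact (j - m) else 0)) {0..1}"
proof (cases "m \<le> j")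
  case True
  have "f z * z ^ m / z ^ j = f z / z ^ (j - m)" if "z \<noteq> 0" for z :: complex
    using that True by (simp add: power_diff)
  then show ?thesis
    using circle_mean_div_power[OF assms, of "j - m"] True r by simp
next
  case False
  define h where "h = (\<lambda>z. f z * z ^ (m - j))"
  have "h holomorphic_on ball 0 r" "continuous_on (cball 0 r) h"
    using hol cont by (auto simp: h_def intro!: holomorphic_intros continuous_intros)
  from circle_mean_div_power[OF r this, of 0] False
  have "((\<lambda>t. h (rcis r (2 * pi * t))) has_integral 0) {0..1}"
    by (simp add: h_def zero_power)
  moreover have "f z * z ^ m / z ^ j = h z" if "z \<noteq> 0" for z :: complex
    using that False by (simp add: h_def power_diff)
  ultimately show ?thesis
    using False r by simp
qed

section \<open>The functional calculus of the Jordan block\<close>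

lemma three_eq_zero_3: "(3::3) = 0"
  by simp

lemma Rep_bit1_3: "Rep_bit1 (0::3) = 0" "Rep_bit1 (1::3) = 1" "Rep_bit1 (2::3) = 2"
  by (simp_all add: bit1.Rep_0 bit1.Rep_1 bit1.Rep_numeral)

lemma norm_vec3_sq: "(norm (v :: complex^3))\<^sup>2 = (norm (v $ 0))\<^sup>2 + (norm (v $ 1))\<^sup>2 + (norm (v $ 2))\<^sup>2"
  by (simp add: norm_vec_sq_eq_sum sum_3 three_eq_zero_3 add_ac)

lemma jordan3_nth: "jordan3 $ i $ j = (if (i = 0 \<and> j = 1) \<or> (i = 1 \<and> j = 2) then 1 else 0)"
  using exhaust_3[of i] exhaust_3[of j] by (auto simp: jordan3_def Rep_bit1_3 three_eq_zero_3)

lemma fun_jordan3_nth: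
  "fun_jordan3 f $ i $ j =
     (if i = j then f 0 else if (i = 0 \<and> j = 1) \<or> (i = 1 \<and> j = 2) then deriv f 0
      else if i = 0 \<and> j = 2 then deriv (deriv f) 0 / 2 else 0)"
proof -
  have "mat_pow jordan3 2 = jordan3 ** jordan3"
    by (simp add: mat_pow_def numeral_2_eq_2)
  then have "fun_jordan3 f = cscale_mat (f 0) (mat 1) + cscale_mat (deriv f 0) jordan3
               + cscale_mat (deriv (deriv f) 0 / 2) (jordan3 ** jordan3)"
    by (simp add: fun_jordan3_def eval_nat_numeral mat_pow_def)
  then show ?thesis
    using exhaust_3[of i] exhaust_3[of j]
    by (auto simp: cscale_mat_def mat_def jordan3_nth matrix_matrix_mult_def sum_3 three_eq_zero_3)
qed

lemma inner_fun_jordan3_eq: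
  "(\<Sum>i\<in>UNIV. cnj (y $ i) * (fun_jordan3 f *v x) $ i) =
     (\<Sum>k<3. \<Sum>j<3. cnj (y $ of_nat k) * x $ of_nat j *
        (if k \<le> j then (deriv ^^ (j - k)) f 0 / fact (j - k) else 0))"
  by (simp add: eval_nat_numeral matrix_vector_mult_def sum_3 three_eq_zero_3 fun_jordan3_nth algebra_simps)

lemma has_integral_inner_fun_jordan3:
  assumes "0 < r" "f holomorphic_on ball 0 r" "continuous_on (cball 0 r) f"
  shows "((\<lambda>t. f (rcis r (2 * pi * t)) * (\<Sum>k<3. cnj (y $ of_nat k) * rcis r (2 * pi * t) ^ k)
                 * (\<Sum>j<3. x $ of_nat j / rcis r (2 * pi * t) ^ j))
           has_integral (\<Sum>i\<in>UNIV. cnj (y $ i) * (fun_jordan3 f *v x) $ i)) {0..1}"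
proof -
  let ?z = "\<lambda>t. rcis r (2 * pi * t)"
  have "((\<lambda>t. \<Sum>k<3. \<Sum>j<3. cnj (y $ of_nat k) * x $ of_nat j * (f (?z t) * ?z t ^ k / ?z t ^ j))
          has_integral (\<Sum>k<3. \<Sum>j<3. cnj (y $ of_nat k) * x $ of_nat j *
                          (if k \<le> j then (deriv ^^ (j - k)) f 0 / fact (j - k) else 0))) {0..1}"
    by (intro has_integral_sum finite_lessThan has_integral_mult_right
          circle_mean_mult_power_div_power[OF assms])
  moreover have "(\<Sum>k<3. \<Sum>j<3. cnj (y $ of_nat k) * x $ of_nat j * (f (?z t) * ?z t ^ k / ?z t ^ j))
      = f (?z t) * (\<Sum>k<3. cnj (y $ of_nat k) * ?z t ^ k) * (\<Sum>j<3. x $ of_nat j / ?z t ^ j)" for t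
    by (simp add: sum_product sum_distrib_left mult_ac)
  ultimately show ?thesis
    by (simp add: inner_fun_jordan3_eq)
qed

lemma norm_inner_fun_jordan3_le:
  assumes r: "0 < r" "r \<le> 1" and hol: "f holomorphic_on ball 0 r" and cont: "continuous_on (cball 0 r) f"
    and M: "\<And>w. w \<in> cball 0 r \<Longrightarrow> norm (f w) \<le> M"
  shows "norm (\<Sum>i\<in>UNIV. cnj (y $ i) * (fun_jordan3 f *v x) $ i) \<le> M / r\<^sup>2 / 2 * ((norm y)\<^sup>2 + (norm x)\<^sup>2)"
proof -
  let ?e = "\<lambda>t. cis (2 * pi * t)"
  define cy where "cy k = cnj (y $ of_nat k) * r ^ k" for k
  define cx where "cx j = cnj (x $ of_nat j) / r ^ j" for j
  define U where "U t = (\<Sum>k<3. cy k * ?e t ^ k)" for t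
  define V where "V t = (\<Sum>j<3. cx j * ?e t ^ j)" for t
  define g where "g t = M / 2 * ((norm (U t))\<^sup>2 / r\<^sup>2 + r\<^sup>2 * (norm (V t))\<^sup>2)" for t
  have integrand: "((\<lambda>t. f (rcis r (2 * pi * t)) * U t * cnj (V t))
          has_integral (\<Sum>i\<in>UNIV. cnj (y $ i) * (fun_jordan3 f *v x) $ i)) {0..1}"
  proof (rule has_integral_eq[OF _ has_integral_inner_fun_jordan3[OF r(1) hol cont]])
    fix t
    have "cnj (?e t) ^ j = 1 / ?e t ^ j" for j
      using divide_conv_cnj[of "?e t ^ j" 1] by (simp add: norm_power)
    then show "f (rcis r (2 * pi * t)) * (\<Sum>k<3. cnj (y $ of_nat k) * rcis r (2 * pi * t) ^ k)
                 * (\<Sum>j<3. x $ of_nat j / rcis r (2 * pi * t) ^ j) = f (rcis r (2 * pi * t)) * U t * cnj (V t)"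
      by (simp add: U_def V_def cx_def cy_def rcis_def power_mult_distrib mult_ac)
  qed
  have g: "(g has_integral M / 2 * ((\<Sum>k<3. (norm (cy k))\<^sup>2) / r\<^sup>2 + r\<^sup>2 * (\<Sum>j<3. (norm (cx j))\<^sup>2))) {0..1}"
    unfolding g_def U_def V_def
    by (intro has_integral_mult_right has_integral_add has_integral_divide
          has_integral_norm_sum_cis_power_sq)
  have M0: "0 \<le> M"
    using M[of 0] r by (metis centre_in_cball less_imp_le norm_ge_zero order_trans)
  have pointwise: "norm (f (rcis r (2 * pi * t)) * U t * cnj (V t)) \<le> g t" for t
  proof -
    have "norm (f (rcis r (2 * pi * t)) * U t * cnj (V t))
          = norm (f (rcis r (2 * pi * t))) * (norm (U t) * norm (V t))"
      by (simp add: norm_mult)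
    also have "\<dots> \<le> M * (norm (U t) * norm (V t))"
      using r by (intro mult_right_mono M) simp_all
    also have "\<dots> \<le> M * (((norm (U t) / r)\<^sup>2 + (r * norm (V t))\<^sup>2) / 2)"
      using sum_squares_bound[of "norm (U t) / r" "r * norm (V t)"] r M0 by (intro mult_left_mono) simp_all
    also have "\<dots> = g t"
      by (simp add: g_def power_divide power_mult_distrib)
    finally show ?thesis .
  qed
  have "norm (\<Sum>i\<in>UNIV. cnj (y $ i) * (fun_jordan3 f *v x) $ i)
          = norm (integral {0..1} (\<lambda>t. f (rcis r (2 * pi * t)) * U t * cnj (V t)))"
    using integrand by (simp add: integral_unique)
  also have "\<dots> \<le> integral {0..1} g"
    using integrand g pointwise by (intro integral_norm_bound_integral) auto
  also have "\<dots> = M / 2 * ((\<Sum>k<3. (norm (cy k))\<^sup>2) / r\<^sup>2 + r\<^sup>2 * (\<Sum>j<3. (norm (cx j))\<^sup>2))"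
    using g by (rule integral_unique)
  also have "\<dots> \<le> M / 2 * ((norm y)\<^sup>2 / r\<^sup>2 + (norm x)\<^sup>2 / r\<^sup>2)"
  proof -
    have "(\<Sum>k<3. (norm (cy k))\<^sup>2) = (norm (y $ 0))\<^sup>2 + r\<^sup>2 * (norm (y $ 1))\<^sup>2 + r ^ 4 * (norm (y $ 2))\<^sup>2"
      by (simp add: cy_def eval_nat_numeral norm_mult norm_power power_mult_distrib flip: power_mult)
    moreover have "r\<^sup>2 * (\<Sum>j<3. (norm (cx j))\<^sup>2)
        = (r ^ 4 * (norm (x $ 0))\<^sup>2 + r\<^sup>2 * (norm (x $ 1))\<^sup>2 + (norm (x $ 2))\<^sup>2) / r\<^sup>2"
      using r by (simp add: cx_def eval_nat_numeral norm_divide norm_power power_divide field_simps)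
    moreover have "r\<^sup>2 \<le> 1" "r ^ 4 \<le> 1"
      using r by (simp_all add: power_le_one)
    ultimately have "(\<Sum>k<3. (norm (cy k))\<^sup>2) \<le> (norm y)\<^sup>2"
      and "r\<^sup>2 * (\<Sum>j<3. (norm (cx j))\<^sup>2) \<le> (norm x)\<^sup>2 / r\<^sup>2"
      unfolding norm_vec3_sq using r
      by (auto intro!: add_mono mult_left_le_one_le divide_right_mono)
    then show ?thesis
      using M0 r by (intro mult_left_mono add_mono divide_right_mono) auto
  qed
  also have "\<dots> = M / r\<^sup>2 / 2 * ((norm y)\<^sup>2 + (norm x)\<^sup>2)"
    by (simp add: add_divide_distrib algebra_simps)
  finally show ?thesis .
qed

lemma mat_norm2_fun_jordan3_div_sup_norm_le:
  assumes r: "0 < r" "r \<le> 1" and hol: "f holomorphic_on ball 0 r" and cont: "continuous_on (cball 0 r) f"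
    and nz: "z \<in> ball 0 r" "f z \<noteq> 0"
  shows "mat_norm2 (fun_jordan3 f) / sup_norm f (ball 0 r) \<le> 1 / r\<^sup>2"
proof -
  let ?M = "sup_norm f (ball 0 r)"
  have M: "norm (f w) \<le> ?M" if "w \<in> cball 0 r" for w
    using r(1) cont that by (rule norm_le_sup_norm)
  have "0 < norm (f z)"
    using nz by simp
  also have "\<dots> \<le> ?M"
    using nz by (intro M) auto
  finally have "0 < ?M" .
  moreover have "mat_norm2 (fun_jordan3 f) \<le> ?M / r\<^sup>2"
    by (intro mat_norm2_le_of_inner_bound norm_inner_fun_jordan3_le[OF r hol cont M])
  ultimately show ?thesis
    by (simp add: divide_le_eq field_simps)
qed

lemma fun_jordan3_square: "fun_jordan3 (\<lambda>z. z\<^sup>2) = (\<chi> i j. if i = 0 \<and> j = 2 then 1 else 0)"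
proof -
  have "deriv (\<lambda>z. z\<^sup>2) = (\<lambda>z::complex. 2 * z)"
    by (intro ext DERIV_imp_deriv) (auto intro!: derivative_eq_intros)
  moreover have "deriv (\<lambda>z. 2 * z) = (\<lambda>z::complex. 2)"
    by (intro ext DERIV_imp_deriv) (auto intro!: derivative_eq_intros)
  ultimately show ?thesis
    using exhaust_3 by (auto simp: vec_eq_iff fun_jordan3_nth three_eq_zero_3)
qed

lemma sup_norm_square_ball:
  assumes "0 < r"
  shows "sup_norm (\<lambda>z. z\<^sup>2) (ball 0 r) = r\<^sup>2"
proof (rule antisym)
  show "sup_norm (\<lambda>z. z\<^sup>2) (ball 0 r) \<le> r\<^sup>2"
    unfolding sup_norm_def using assms
    by (intro cSUP_least) (auto simp: norm_power intro!: power_mono)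
  have "norm ((complex_of_real r)\<^sup>2) \<le> sup_norm (\<lambda>z. z\<^sup>2) (ball 0 r)"
    using assms by (intro norm_le_sup_norm) (auto intro!: continuous_intros)
  then show "r\<^sup>2 \<le> sup_norm (\<lambda>z. z\<^sup>2) (ball 0 r)"
    using assms by (simp add: norm_power)
qed

section \<open>The constant delta\<close>

lemma vector_derivative_sigma:
  assumes "0 < r"
  shows "vector_derivative (sigma r) (at s) = \<i> * cis (s / r)"
proof -
  have "((\<lambda>z. of_real r * exp (\<i> * (z / of_real r))) has_field_derivative
          of_real r * (exp (\<i> * (of_real s / of_real r)) * (\<i> / of_real r))) (at (of_real s))"
    by (auto intro!: derivative_eq_intros)
  moreover have "sigma r = (\<lambda>x. of_real r * exp (\<i> * (of_real x / of_real r)))"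
    by (auto simp: sigma_def)
  ultimately have "(sigma r has_vector_derivative of_real r * (exp (\<i> * (of_real s / of_real r)) * (\<i> / of_real r))) (at s)"
    using has_vector_derivative_real_field by fastforce
  then show ?thesis
    using assms by (simp add: vector_derivative_at cis_conv_exp)
qed

lemma mu_mat_nth:
  fixes r s :: real and e :: complex
  assumes r: "0 < r"
  defines "e \<equiv> cis (s / r)"
  shows "mu_mat r s $ i $ j = of_real (1 / (2 * pi * r ^ 3)) *
     (if i = j then of_real (2 * r\<^sup>2)
      else if (i = 0 \<and> j = 1) \<or> (i = 1 \<and> j = 2) then of_real r * cnj e
      else if (i = 1 \<and> j = 0) \<or> (i = 2 \<and> j = 1) then of_real r * e
      else if i = 0 \<and> j = 2 then cnj e ^ 2 else e ^ 2)"
proof -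
  have e: "e \<noteq> 0" "cnj e = 1 / e"
    by (simp_all add: e_def cis_cnj flip: cis_inverse inverse_eq_divide)
  define z where "z = sigma r s"
  have z: "z = of_real r * e"
    by (simp add: z_def sigma_def e_def cis_conv_exp)
  then have "z \<noteq> 0" using r e by simp
  define N :: "complex^3^3" where "N = cscale_mat z (mat 1) - jordan3"
  define Ni :: "complex^3^3" where
    "Ni = (\<chi> i j. if i = j then 1 / z else if (i = 0 \<and> j = 1) \<or> (i = 1 \<and> j = 2) then 1 / z\<^sup>2
                   else if i = 0 \<and> j = 2 then 1 / z ^ 3 else 0)"
  have "N ** Ni = mat 1" "Ni ** N = mat 1"
    unfolding vec_eq_iff forall_3 using \<open>z \<noteq> 0\<close>
    by (simp_all add: N_def Ni_def matrix_matrix_mult_def sum_3 cscale_mat_def mat_def jordan3_nth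
                      three_eq_zero_3 field_simps power2_eq_square power3_eq_cube)
  then have inv: "matrix_inv N = Ni"
    by (rule matrix_inv_unique)
  have vd: "vector_derivative (sigma r) (at s) / (2 * complex_of_real pi * \<i>) = e / (2 * of_real pi)"
    by (simp add: vector_derivative_sigma[OF r] e_def)
  show ?thesis
    unfolding mu_mat_def Let_def vd inv[unfolded N_def z_def]
    using exhaust_3[of i] exhaust_3[of j] e(1) r
    by (auto simp: e(2) Ni_def[unfolded z_def] adjoint_mat_def cscale_mat_def z[unfolded z_def] three_eq_zero_3
                   field_simps power2_eq_square power3_eq_cube)
qed

lemma mu_mat_mult_vec:
  fixes r s :: real and e :: complex
  assumes "0 < r"
  defines "e \<equiv> cis (s / r)" and "b \<equiv> complex_of_real (1 / (2 * pi * r ^ 3))"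
  shows "(mu_mat r s *v v) $ 0 = b * (of_real (2 * r\<^sup>2) * v $ 0 + of_real r * cnj e * v $ 1 + cnj e ^ 2 * v $ 2)"
    and "(mu_mat r s *v v) $ 1 = b * (of_real r * e * v $ 0 + of_real (2 * r\<^sup>2) * v $ 1 + of_real r * cnj e * v $ 2)"
    and "(mu_mat r s *v v) $ 2 = b * (e ^ 2 * v $ 0 + of_real r * e * v $ 1 + of_real (2 * r\<^sup>2) * v $ 2)"
  using assms by (simp_all add: matrix_vector_mult_def sum_3 three_eq_zero_3 mu_mat_nth algebra_simps)

lemma inner_mu_mat:
  fixes r s :: real
  assumes r: "0 < r"
  defines "e \<equiv> cis (s / r)"
  shows "(\<Sum>i\<in>UNIV. cnj (v $ i) * (mu_mat r s *v v) $ i) =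
           of_real ((2 * r\<^sup>2 - 1) / (2 * pi * r ^ 3) * (norm v)\<^sup>2 + 1 / (2 * pi * r ^ 3) *
             ((norm (v $ 0 + of_real r * cnj e * v $ 1 + cnj e ^ 2 * v $ 2))\<^sup>2 + (1 - r\<^sup>2) * (norm (v $ 1))\<^sup>2))"
proof -
  have ee: "e * cnj e = 1"
    by (simp add: e_def cis_cnj cis_mult)
  define w where "w = v $ 0 + of_real r * cnj e * v $ 1 + cnj e ^ 2 * v $ 2"
  have "(\<Sum>i\<in>UNIV. cnj (v $ i) * (mu_mat r s *v v) $ i) =
          of_real ((2 * r\<^sup>2 - 1) / (2 * pi * r ^ 3)) * (cnj (v $ 0) * v $ 0 + cnj (v $ 1) * v $ 1 + cnj (v $ 2) * v $ 2)
          + of_real (1 / (2 * pi * r ^ 3)) *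
            (cnj w * w + of_real (1 - r\<^sup>2) * (cnj (v $ 1) * v $ 1))"
    unfolding w_def sum_3 three_eq_zero_3 mu_mat_mult_vec[OF r, of s, folded e_def] complex_cnj_add complex_cnj_mult
      complex_cnj_cnj complex_cnj_power complex_cnj_complex_of_real
    using ee by (simp add: field_simps) algebra
  then show ?thesis
    unfolding w_def[symmetric] by (simp add: norm_vec3_sq cnj_mult_self del: of_real_power)
qed

lemma lambda_min_mu_mat:
  assumes r: "0 < r" "r \<le> 1"
  shows "lambda_min (mu_mat r s) = (2 * r\<^sup>2 - 1) / (2 * pi * r ^ 3)"
proof -
  define e where "e = cis (s / r)"
  have ee: "e * cnj e = 1"
    by (simp add: e_def cis_cnj cis_mult)
  define w :: "complex^3" where "w = (\<chi> i. if i = 0 then 1 else if i = 2 then - e\<^sup>2 else 0)"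
  \<comment> \<open>Both squares in inner_mu_mat vanish at w.\<close>
  have eigen: "mu_mat r s *v w = of_real ((2 * r\<^sup>2 - 1) / (2 * pi * r ^ 3)) *s w"
    unfolding vec_eq_iff forall_3 three_eq_zero_3 using r(1) ee
    by (simp add: mu_mat_mult_vec[OF r(1), of s, folded e_def] w_def field_simps power2_eq_square power3_eq_cube)
  have "w \<noteq> 0"
    by (simp add: w_def vec_eq_iff exI[of _ 0])
  moreover have "(2 * r\<^sup>2 - 1) / (2 * pi * r ^ 3) * (norm v)\<^sup>2
                   \<le> Re (\<Sum>i\<in>UNIV. cnj (v $ i) * (mu_mat r s *v v) $ i)" for v
  proof -
    have "0 \<le> (1 - r\<^sup>2) * (norm (v $ 1))\<^sup>2"
      using r by (simp add: power_le_one)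
    then show ?thesis
      using r(1) by (simp add: inner_mu_mat)
  qed
  ultimately show ?thesis
    by (rule lambda_min_eqI[OF eigen])
qed

lemma delta_eq:
  assumes "0 < r" "r \<le> 1"
  shows "delta r = 1 / r\<^sup>2 - 2"
proof -
  have "integral {0..2 * pi * r} (\<lambda>s. lambda_min (mu_mat r s)) = (2 * pi * r) * ((2 * r\<^sup>2 - 1) / (2 * pi * r ^ 3))"
    using assms by (simp add: lambda_min_mu_mat)
  also have "\<dots> = 2 - 1 / r\<^sup>2"
    using assms by (simp add: field_simps power2_eq_square power3_eq_cube)
  finally show ?thesis
    by (simp add: delta_def)
qed

theorem theorem3:
  fixes r :: real
  assumes "0 < r" and "r \<le> 1"
  shows "(\<forall>f. f holomorphic_on ball 0 r \<and> continuous_on (cball 0 r) f \<and>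
              (\<exists>z\<in>ball 0 r. f z \<noteq> 0) \<longrightarrow>
              mat_norm2 (fun_jordan3 f) / sup_norm f (ball 0 r) \<le> 2 + delta r)
       \<and> (\<exists>f. f holomorphic_on ball 0 r \<and> continuous_on (cball 0 r) f \<and>
              (\<exists>z\<in>ball 0 r. f z \<noteq> 0) \<and>
              mat_norm2 (fun_jordan3 f) / sup_norm f (ball 0 r) = 2 + delta r)"
proof -
  have two_plus_delta: "2 + delta r = 1 / r\<^sup>2"
    using delta_eq[OF assms] by simp
  have square: "mat_norm2 (fun_jordan3 (\<lambda>z. z\<^sup>2)) / sup_norm (\<lambda>z. z\<^sup>2) (ball 0 r) = 1 / r\<^sup>2"
    using assms by (simp add: fun_jordan3_square mat_norm2_matrix_unit sup_norm_square_ball)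
  show ?thesis
    unfolding two_plus_delta using assms square mat_norm2_fun_jordan3_div_sup_norm_le
    by (auto intro!: exI[of _ "\<lambda>z. z\<^sup>2"] bexI[of _ "of_real (r / 2)"] holomorphic_intros continuous_intros)
qed

end
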